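(* Let $L\geq\delta\geq 2$ and let $G$ be an $(L,\delta)$-almost-biregular graph. Then $G$ has a $64$-almost-regular subgraph with average degree at least $\frac{\delta}{16\log L}$.
   Context: Logarithms are to base $2$. A graph is $K$-almost-regular if its maximum degree is at most $K$ times its minimum degree. A bipartite graph $G$ is $(L,d)$-almost-biregular if it has parts $A$ and $B$ (with $A$ non-empty) such that $d_G(v)=d$ for every $v\in B$, and, writing $D=e(G)/|A|$, we have $D\geq d$ (equivalently $|A|\leq|B|$) and $d_G(u)\leq LD$ for every $u\in A$. Subgraphs are required to be non-empty; average degree is $2e/|V|$. *)

theory Defs
  imports Complex_Main
begin

definition graph :: "'a set \<Rightarrow> 'a set set \<Rightarrow> bool" where
  "graph V E \<longleftrightarrow> finite V \<and> (\<forall>e\<in>E. e \<subseteq> V \<and> card e = 2)"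

definition degree :: "'a set set \<Rightarrow> 'a \<Rightarrow> nat" where
  "degree E v = card {e\<in>E. v \<in> e}"

definition subgraph :: "'a set \<Rightarrow> 'a set set \<Rightarrow> 'a set \<Rightarrow> 'a set set \<Rightarrow> bool" where
  "subgraph V' E' V E \<longleftrightarrow> graph V' E' \<and> V' \<noteq> {} \<and> V' \<subseteq> V \<and> E' \<subseteq> E"

definition avg_degree :: "'a set \<Rightarrow> 'a set set \<Rightarrow> real" where
  "avg_degree V E = 2 * real (card E) / real (card V)"

definition almost_regular :: "real \<Rightarrow> 'a set \<Rightarrow> 'a set set \<Rightarrow> bool" where
  "almost_regular K V E \<longleftrightarrow>
     real (Max (degree E ` V)) \<le> K * real (Min (degree E ` V))"

definition almost_biregular :: "real \<Rightarrow> nat \<Rightarrow> 'a set \<Rightarrow> 'a set set \<Rightarrow> bool" where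
  "almost_biregular L d V E \<longleftrightarrow> graph V E \<and>
     (\<exists>A B. A \<union> B = V \<and> A \<inter> B = {} \<and> A \<noteq> {} \<and>
        (\<forall>e\<in>E. \<exists>a\<in>A. \<exists>b\<in>B. e = {a, b}) \<and>
        (\<forall>v\<in>B. degree E v = d) \<and>
        real (card E) / real (card A) \<ge> real d \<and>
        (\<forall>u\<in>A. real (degree E u) \<le> L * (real (card E) / real (card A))))"

end

theory Submission
  imports Defs
begin

text \<open>Let D = e(G)/|A|. The vertices of A of degree at least D/2 carry half of the edges; grouping
  them into the degree ranges [8^j D/2, 8^(j+1) D/2) for j \<le> log_8 (2L) gives a class C whose
  degrees lie between a and 8a and which meets a 1/O(log L) fraction of the edges. Pack s-stars
  centred in B into C, each vertex of C taking at most 8s edges, with s about e(C)/(2|B|). For a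
  maximal packing, counting the edges at C shows that there are at least |C|/6 centres, so the
  packing has maximum degree 8s and average degree at least 2s/7. Its subgraph maximising
  e(S) - c|S|, for c its density, has minimum degree at least c and is 64-almost-regular.
  When \<delta> \<le> 16 log L a single edge already does.\<close>

definition incident_edges :: "'a set set \<Rightarrow> 'a set \<Rightarrow> 'a set set" where
  "incident_edges E T = {e\<in>E. \<exists>u\<in>T. u \<in> e}"

definition induced_edges :: "'a set set \<Rightarrow> 'a set \<Rightarrow> 'a set set" where
  "induced_edges E S = {e\<in>E. e \<subseteq> S}"

lemma finite_edges_of_graph: "graph V E \<Longrightarrow> finite E"
  unfolding graph_def by (meson Pow_iff finite_Pow_iff finite_subset subsetI)

lemma degree_mono: "finite F \<Longrightarrow> F' \<subseteq> F \<Longrightarrow> degree F' v \<le> degree F v"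
  unfolding degree_def by (rule card_mono) auto

lemma sum_degree_eq_card:
  assumes "finite F" "finite X" "\<And>e. e \<in> F \<Longrightarrow> card {x\<in>X. x \<in> e} = 1"
  shows "(\<Sum>x\<in>X. degree F x) = card F"
proof -
  have "(\<Sum>x\<in>X. degree F x) = (\<Sum>x\<in>X. \<Sum>e\<in>{e. e\<in>F \<and> x \<in> e}. (1::nat))"
    by (simp add: degree_def)
  also have "\<dots> = (\<Sum>e\<in>F. card {x\<in>X. x \<in> e})"
    using sum.swap_restrict[OF assms(2,1), of "\<lambda>_ _. (1::nat)" "\<lambda>x e. x \<in> e"] by simp
  finally show ?thesis
    using assms(3) by simp
qed

lemma exists_ge_average:
  fixes f :: "'i \<Rightarrow> real"
  assumes "finite I" "I \<noteq> {}"
  shows "\<exists>i\<in>I. sum f I \<le> real (card I) * f i"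
proof (rule ccontr)
  assume "\<not> ?thesis"
  then have "sum f I < (\<Sum>i\<in>I. sum f I / real (card I))"
    using assms by (intro sum_strict_mono) (auto simp: field_simps card_gt_0_iff)
  then show False
    using assms by simp
qed

lemma power_floor_log_bounds:
  fixes b y :: real
  assumes "1 < b" "1 \<le> y"
  shows "b ^ nat \<lfloor>log b y\<rfloor> \<le> y" and "y < b ^ (nat \<lfloor>log b y\<rfloor> + 1)"
proof -
  have "0 \<le> \<lfloor>log b y\<rfloor>"
    using assms by simp
  then have "real (nat \<lfloor>log b y\<rfloor>) = of_int \<lfloor>log b y\<rfloor>"
    by simp
  moreover have "b powr of_int \<lfloor>log b y\<rfloor> \<le> y \<and> y < b powr (of_int \<lfloor>log b y\<rfloor> + 1)"
    using floor_log_eq_powr_iff[of y b "\<lfloor>log b y\<rfloor>"] assms by simp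
  ultimately show "b ^ nat \<lfloor>log b y\<rfloor> \<le> y" "y < b ^ (nat \<lfloor>log b y\<rfloor> + 1)"
    using assms by (simp_all add: powr_realpow[symmetric] powr_add mult.commute)
qed

lemma log8_eq: "log 8 x = log 2 x / 3"
  using log_base_pow[of 2 3 x] by simp

lemma le_16_log2:
  fixes L :: real
  assumes "2 \<le> L" "L < 64"
  shows "L \<le> 16 * log 2 L"
proof (cases "L < 16")
  case True
  have "log 2 2 \<le> log 2 L"
    using assms by simp
  then show ?thesis
    using True by simp
next
  case False
  then have "log 2 16 \<le> log 2 L"
    by simp
  moreover have "log 2 (16::real) = 4"
    using log_pow_cancel[of 2 4] by simp
  ultimately show ?thesis
    using assms by linarith
qed

lemma exists_star_size:
  fixes l d b e :: real
  assumes "6 \<le> l" "16 * l < d" "0 < b" "3 * d * b \<le> 2 * (l + 4) * e"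
  shows "\<exists>s::nat. 0 < s \<and> 2 * real s * b \<le> e \<and> d / (16 * l) \<le> 2 * real s / 7"
proof -
  define s where "s = nat \<lfloor>e / (2 * b)\<rfloor>"
  have "0 < 2 * (l + 4) * e"
    using assms mult_pos_pos[of "3 * d" b] by linarith
  then have "0 \<le> e / (2 * b)"
    using assms(1,3) by (simp add: zero_less_mult_iff)
  then have "real s = of_int \<lfloor>e / (2 * b)\<rfloor>"
    by (simp add: s_def)
  then have "e / (2 * b) - 1 \<le> real s" "real s \<le> e / (2 * b)"
    by linarith+
  have "16 * l * (17 * l - 28) \<le> d * (17 * l - 28)"
    using assms(1,2) by (intro mult_right_mono) auto
  moreover have "0 \<le> l * (240 * l - 576)"
    using assms(1) by simp
  then have "32 * l * (l + 4) \<le> 16 * l * (17 * l - 28)"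
    by (simp add: algebra_simps)
  ultimately have "32 * l * (l + 4) \<le> d * (17 * l - 28)"
    by linarith
  then have "7 * d / (32 * l) \<le> 3 * d / (4 * (l + 4)) - 1"
    using assms(1) by (simp add: field_simps)
  moreover have "3 * d / (4 * (l + 4)) \<le> e / (2 * b)"
    using assms(1,3,4) by (simp add: field_simps)
  ultimately have "7 * d / (32 * l) \<le> real s"
    using \<open>e / (2 * b) - 1 \<le> real s\<close> by linarith
  moreover have "0 < d / (16 * l)"
    using assms(1,2) by simp
  moreover have "2 * real s * b \<le> e"
    using \<open>real s \<le> e / (2 * b)\<close> assms(3) by (simp add: field_simps)
  ultimately show ?thesis
    by (intro exI[of _ s]) (auto simp: field_simps)
qed

section \<open>Dense subgraphs\<close>

text \<open>Take a nonempty S maximising e(S) - c |S|: deleting a vertex of degree below c would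
  increase this potential.\<close>
lemma exists_subgraph_min_degree_ge:
  fixes c :: real
  assumes gW: "graph W F" and Wne: "W \<noteq> {}" and dense: "c * real (card W) \<le> real (card F)"
  shows "\<exists>S\<subseteq>W. S \<noteq> {} \<and> c * real (card S) \<le> real (card (induced_edges F S))
           \<and> (\<forall>v\<in>S. c \<le> real (degree (induced_edges F S) v))"
proof -
  define phi where "phi S = real (card (induced_edges F S)) - c * real (card S)" for S
  define P where "P = {S. S \<subseteq> W \<and> S \<noteq> {}}"
  have finW: "finite W" and F2: "\<And>e. e \<in> F \<Longrightarrow> e \<subseteq> W \<and> card e = 2"
    using gW by (auto simp: graph_def)
  have finF: "finite F"
    using gW by (rule finite_edges_of_graph)
  have "finite P" "W \<in> P"
    using finW Wne by (auto simp: P_def)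
  then obtain S where "S \<in> P" and maxS: "\<And>T. T \<in> P \<Longrightarrow> phi T \<le> phi S"
    using ex_is_arg_min_if_finite[of P "\<lambda>S. - phi S"] by (auto simp: is_arg_min_linorder)
  then have SW: "S \<subseteq> W" and Sne: "S \<noteq> {}" and finS: "finite S"
    using finW by (auto simp: P_def intro: finite_subset)
  have "induced_edges F W = F"
    using F2 by (auto simp: induced_edges_def)
  then have "0 \<le> phi S"
    using maxS[OF \<open>W \<in> P\<close>] dense by (simp add: phi_def)
  moreover have "c \<le> real (degree (induced_edges F S) v)" if vS: "v \<in> S" for v
  proof (cases "S = {v}")
    case True
    have "\<not> e \<subseteq> S" if "e \<in> F" for e
      using card_mono[OF finS, of e] F2[OF that] True by auto
    then have "induced_edges F S = {}"
      by (auto simp: induced_edges_def)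
    then show ?thesis
      using \<open>0 \<le> phi S\<close> True by (simp add: phi_def)
  next
    case False
    let ?FS = "induced_edges F S"
    have "S - {v} \<in> P"
      using SW False vS by (auto simp: P_def)
    have "induced_edges F (S - {v}) = {e\<in>?FS. v \<notin> e}"
      by (auto simp: induced_edges_def)
    moreover have "card ?FS = degree ?FS v + card {e\<in>?FS. v \<notin> e}"
      unfolding degree_def using finF
      by (subst card_Un_disjoint[symmetric])
        (auto simp: induced_edges_def intro: arg_cong[where f=card])
    moreover have "card S = Suc (card (S - {v}))"
      using finS vS by (rule card.remove)
    ultimately have "phi (S - {v}) = phi S - real (degree ?FS v) + c"
      by (simp add: phi_def algebra_simps)
    then show ?thesis
      using maxS[OF \<open>S - {v} \<in> P\<close>] by simp
  qed
  ultimately show ?thesis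
    using SW Sne by (auto simp: phi_def)
qed

lemma almost_regular_subgraph_of_max_degree:
  fixes \<Delta> :: real
  assumes gW: "graph W F" and "W \<subseteq> V" "F \<subseteq> E" "W \<noteq> {}"
    and maxdeg: "\<And>v. v \<in> W \<Longrightarrow> real (degree F v) \<le> \<Delta>"
    and \<Delta>: "\<Delta> \<le> 64 * (real (card F) / real (card W))"
  shows "\<exists>V' E'. subgraph V' E' V E \<and> almost_regular 64 V' E' \<and> avg_degree W F \<le> avg_degree V' E'"
proof -
  define c where "c = real (card F) / real (card W)"
  have finW: "finite W"
    using gW by (simp add: graph_def)
  then have cW: "c * real (card W) = real (card F)"
    using \<open>W \<noteq> {}\<close> by (simp add: c_def)
  obtain S where SW: "S \<subseteq> W" and Sne: "S \<noteq> {}"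
    and dense: "c * real (card S) \<le> real (card (induced_edges F S))"
    and mindeg: "\<And>v. v \<in> S \<Longrightarrow> c \<le> real (degree (induced_edges F S) v)"
    using exists_subgraph_min_degree_ge[OF gW \<open>W \<noteq> {}\<close>, of c] cW by auto
  let ?FS = "induced_edges F S"
  have finS: "finite S"
    using finW SW finite_subset by blast
  have gS: "graph S ?FS"
    using gW finS by (auto simp: graph_def induced_edges_def)
  then have "subgraph S ?FS V E"
    using Sne SW assms(2,3) by (auto simp: subgraph_def induced_edges_def)
  moreover have "almost_regular 64 S ?FS"
  proof -
    have fin: "finite (degree ?FS ` S)" and ne: "degree ?FS ` S \<noteq> {}"
      using finS Sne by auto
    obtain v1 where v1: "Max (degree ?FS ` S) = degree ?FS v1" "v1 \<in> S"
      using Max_in[OF fin ne] by (rule imageE)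
    obtain v2 where v2: "Min (degree ?FS ` S) = degree ?FS v2" "v2 \<in> S"
      using Min_in[OF fin ne] by (rule imageE)
    have "real (degree ?FS v1) \<le> real (degree F v1)"
      using degree_mono[OF finite_edges_of_graph[OF gW], of ?FS v1]
      by (auto simp: induced_edges_def)
    also have "\<dots> \<le> 64 * c"
      using maxdeg v1(2) SW \<Delta> by (force simp: c_def)
    also have "\<dots> \<le> 64 * real (degree ?FS v2)"
      using mindeg[OF v2(2)] by simp
    finally show ?thesis
      unfolding almost_regular_def v1(1) v2(1) .
  qed
  moreover have "avg_degree W F \<le> avg_degree S ?FS"
    using dense cW finS Sne \<open>W \<noteq> {}\<close> finW
    by (simp add: avg_degree_def c_def card_gt_0_iff field_simps)
  ultimately show ?thesis
    by blast
qed

lemma exists_almost_regular_subgraph_of_edge: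
  assumes "graph V E" "e \<in> E"
  shows "\<exists>V' E'. subgraph V' E' V E \<and> almost_regular 64 V' E' \<and> 1 \<le> avg_degree V' E'"
proof -
  have "card e = 2" "e \<subseteq> V"
    using assms by (auto simp: graph_def)
  then have "graph e {e}" "e \<noteq> {}" "finite e"
    by (auto simp: graph_def card_ge_0_finite)
  moreover have "degree {e} v \<le> card {e}" for v
    unfolding degree_def by (rule card_mono) auto
  then have "real (degree {e} v) \<le> 1" for v
    by simp
  ultimately obtain V' E' where "subgraph V' E' V E" "almost_regular 64 V' E'"
    "avg_degree e {e} \<le> avg_degree V' E'"
    using almost_regular_subgraph_of_max_degree[of e "{e}" V E 1] \<open>e \<subseteq> V\<close> assms(2) \<open>card e = 2\<close>
    by fastforce
  moreover have "avg_degree e {e} = 1"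
    using \<open>card e = 2\<close> by (simp add: avg_degree_def)
  ultimately show ?thesis
    by auto
qed

section \<open>Capped star packings\<close>

text \<open>For H between C and B, a capped packing is a union of s-stars centred in B that
  loads each vertex of C at most M times.\<close>
definition capped_packing ::
    "'a set \<Rightarrow> 'a set \<Rightarrow> nat \<Rightarrow> nat \<Rightarrow> 'a set set \<Rightarrow> 'a set set \<Rightarrow> bool" where
  "capped_packing C B s M H F \<longleftrightarrow>
     F \<subseteq> H \<and> (\<forall>v\<in>B. degree F v = 0 \<or> degree F v = s) \<and> (\<forall>u\<in>C. degree F u \<le> M)"

definition free_edges :: "'a set \<Rightarrow> nat \<Rightarrow> 'a set set \<Rightarrow> 'a set set \<Rightarrow> 'a \<Rightarrow> 'a set set" where
  "free_edges C M H F v = {e\<in>H. v \<in> e \<and> (\<forall>u\<in>C. u \<in> e \<longrightarrow> degree F u < M)}"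

lemma capped_packing_add_star:
  assumes F: "capped_packing C B s M H F" and finH: "finite H"
    and H: "\<And>e. e \<in> H \<Longrightarrow> \<exists>u\<in>C. \<exists>v\<in>B. e = {u, v}" and CB: "C \<inter> B = {}"
    and v: "v \<in> B" "degree F v = 0" and T: "T \<subseteq> free_edges C M H F v" "card T = s"
  shows "capped_packing C B s M H (F \<union> T)"
proof -
  have TH: "T \<subseteq> H" and Tv: "\<And>e. e \<in> T \<Longrightarrow> v \<in> e"
    using T by (auto simp: free_edges_def)
  have FH: "F \<subseteq> H"
    using F by (simp add: capped_packing_def)
  have star: "\<exists>u\<in>C. e = {u, v}" if "e \<in> T" for e
    using H[of e] TH Tv[of e] that CB v(1) by auto
  have "{e\<in>F. v \<in> e} = {}"
    using v(2) finite_subset[OF FH finH] by (simp add: degree_def)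
  then have "{e\<in>F \<union> T. v \<in> e} = T"
    using Tv by auto
  then have "degree (F \<union> T) v = s"
    using T(2) by (simp add: degree_def)
  moreover have "degree (F \<union> T) w = degree F w" if "w \<in> B" "w \<noteq> v" for w
  proof -
    have "{e\<in>F \<union> T. w \<in> e} = {e\<in>F. w \<in> e}"
      using star that CB by fastforce
    then show ?thesis
      by (simp add: degree_def)
  qed
  moreover have "degree (F \<union> T) u \<le> M" if u: "u \<in> C" for u
  proof (cases "\<exists>e\<in>T. u \<in> e")
    case False
    then have "{e\<in>F \<union> T. u \<in> e} = {e\<in>F. u \<in> e}"
      by auto
    then show ?thesis
      using F u by (simp add: degree_def capped_packing_def)
  next
    case True
    then have "degree F u < M"
      using T(1) u by (auto simp: free_edges_def)
    moreover have "{e\<in>T. u \<in> e} \<subseteq> {{u, v}}"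
      using star u CB v(1) by fastforce
    then have "card {e\<in>T. u \<in> e} \<le> 1"
      using card_mono[of "{{u, v}}"] by fastforce
    moreover have "degree (F \<union> T) u \<le> degree F u + card {e\<in>T. u \<in> e}"
    proof -
      have "{e\<in>F \<union> T. u \<in> e} = {e\<in>F. u \<in> e} \<union> {e\<in>T. u \<in> e}"
        by auto
      then show ?thesis
        unfolding degree_def by (simp add: card_Un_le)
    qed
    ultimately show ?thesis
      by linarith
  qed
  ultimately show ?thesis
    using F TH unfolding capped_packing_def by (metis Un_least)
qed

lemma sum_degree_capped_packing:
  assumes "capped_packing C B s M H F" "finite B"
  shows "(\<Sum>v\<in>B. degree F v) = s * card {v\<in>B. degree F v = s}"
proof -
  have "(\<Sum>v\<in>B. degree F v) = (\<Sum>v\<in>B. if v \<in> {v\<in>B. degree F v = s} then s else 0)"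
    using assms(1) by (intro sum.cong) (auto simp: capped_packing_def)
  also have "\<dots> = s * card {v\<in>B. degree F v = s}"
    using assms(2) by (simp add: sum.If_cases Int_def)
  finally show ?thesis .
qed

text \<open>A packing with the most edges cannot be extended by a further s-star.\<close>
lemma exists_maximal_capped_packing:
  assumes finH: "finite H" and H: "\<And>e. e \<in> H \<Longrightarrow> \<exists>u\<in>C. \<exists>v\<in>B. e = {u, v}"
    and CB: "C \<inter> B = {}" and "0 < s"
  shows "\<exists>F. capped_packing C B s M H F \<and>
           (\<forall>v\<in>B. degree F v = 0 \<longrightarrow> card (free_edges C M H F v) < s)"
proof -
  define Q where "Q = {F. capped_packing C B s M H F}"
  have "finite Q"
    using finH by (auto simp: Q_def capped_packing_def intro: finite_subset[of _ "Pow H"])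
  moreover have "{} \<in> Q"
    by (simp add: Q_def capped_packing_def degree_def)
  ultimately obtain F where "F \<in> Q" and maxF: "\<And>F'. F' \<in> Q \<Longrightarrow> card F' \<le> card F"
    using ex_is_arg_min_if_finite[of Q "\<lambda>F. - int (card F)"] by (auto simp: is_arg_min_linorder)
  have finF: "finite F"
    using \<open>F \<in> Q\<close> finH by (auto simp: Q_def capped_packing_def intro: finite_subset)
  have "card (free_edges C M H F v) < s" if v: "v \<in> B" "degree F v = 0" for v
  proof (rule ccontr)
    assume "\<not> ?thesis"
    then obtain T where T: "T \<subseteq> free_edges C M H F v" "card T = s"
      by (meson not_less obtain_subset_with_card_n)
    have "finite T"
      using T(2) \<open>0 < s\<close> card.infinite by fastforce
    have "F \<inter> T = {}"
      using v(2) T(1) finF by (auto simp: degree_def free_edges_def)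
    then have "card (F \<union> T) = card F + s"
      using card_Un_disjoint[OF finF \<open>finite T\<close>] T(2) by simp
    moreover have "F \<union> T \<in> Q"
      using capped_packing_add_star[OF _ finH H CB v T] \<open>F \<in> Q\<close> by (simp add: Q_def)
    ultimately show False
      using maxF \<open>0 < s\<close> by fastforce
  qed
  then show ?thesis
    using \<open>F \<in> Q\<close> by (auto simp: Q_def)
qed

section \<open>Bipartite graphs\<close>

locale bipartite_graph =
  fixes V :: "'a set" and E :: "'a set set" and A B :: "'a set"
  assumes graph_VE: "graph V E" and parts: "A \<union> B = V" and parts_disjoint: "A \<inter> B = {}"
    and edge_ends: "\<And>e. e \<in> E \<Longrightarrow> \<exists>a\<in>A. \<exists>b\<in>B. e = {a, b}"
begin

lemma finite_V: "finite V"
  using graph_VE by (simp add: graph_def)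

lemma finite_E: "finite E"
  using graph_VE by (rule finite_edges_of_graph)

lemma finite_A: "finite A" and finite_B: "finite B"
  using finite_V parts by auto

lemma sum_degree_B:
  assumes "F \<subseteq> E"
  shows "(\<Sum>v\<in>B. degree F v) = card F"
proof (rule sum_degree_eq_card)
  show "finite F" "finite B"
    using finite_subset[OF assms finite_E] finite_B .
  fix e assume "e \<in> F"
  then obtain a b where "a \<in> A" "b \<in> B" "e = {a, b}"
    using assms edge_ends by blast
  then have "{x\<in>B. x \<in> e} = {b}"
    using parts_disjoint by auto
  then show "card {x\<in>B. x \<in> e} = 1"
    by simp
qed

lemma sum_degree_A:
  assumes "F \<subseteq> E" "T \<subseteq> A" "\<And>e. e \<in> F \<Longrightarrow> \<exists>u\<in>T. u \<in> e"
  shows "(\<Sum>u\<in>T. degree F u) = card F"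
proof (rule sum_degree_eq_card)
  show "finite F" "finite T"
    using finite_subset[OF assms(1) finite_E] finite_subset[OF assms(2) finite_A] .
  fix e assume "e \<in> F"
  then obtain a b u where "a \<in> A" "b \<in> B" "e = {a, b}" "u \<in> T" "u \<in> e"
    using assms edge_ends by blast
  then have "{x\<in>T. x \<in> e} = {u}"
    using assms(2) parts_disjoint by auto
  then show "card {x\<in>T. x \<in> e} = 1"
    by simp
qed

lemma card_incident_edges:
  assumes "T \<subseteq> A"
  shows "card (incident_edges E T) = (\<Sum>u\<in>T. degree E u)"
proof -
  have "card (incident_edges E T) = (\<Sum>u\<in>T. degree (incident_edges E T) u)"
    using assms by (intro sum_degree_A[symmetric]) (auto simp: incident_edges_def)
  also have "\<dots> = (\<Sum>u\<in>T. degree E u)"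
  proof (rule sum.cong)
    fix u assume "u \<in> T"
    then have "{e\<in>incident_edges E T. u \<in> e} = {e\<in>E. u \<in> e}"
      by (auto simp: incident_edges_def)
    then show "degree (incident_edges E T) u = degree E u"
      by (simp add: degree_def)
  qed simp
  finally show ?thesis .
qed

lemma incident_edges_ends:
  assumes "C \<subseteq> A" "e \<in> incident_edges E C"
  shows "\<exists>u\<in>C. \<exists>v\<in>B. e = {u, v}"
proof -
  obtain u where u: "u \<in> C" "u \<in> e" and "e \<in> E"
    using assms(2) by (auto simp: incident_edges_def)
  then obtain a b where "a \<in> A" "b \<in> B" "e = {a, b}"
    using edge_ends by blast
  moreover have "u \<notin> B"
    using u(1) assms(1) parts_disjoint by blast
  ultimately show ?thesis
    using u by auto
qed

text \<open>An edge at C either ends at a centre of a star of F, or is one of the fewer than s free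
  edges at some other vertex of B, or meets a vertex of C of full load M.\<close>
lemma card_incident_edges_le_packing:
  assumes degB: "\<And>v. v \<in> B \<Longrightarrow> degree E v = \<delta>" and C: "C \<subseteq> A"
    and F: "capped_packing C B s M (incident_edges E C) F"
    and maximal: "\<forall>v\<in>B. degree F v = 0 \<longrightarrow> card (free_edges C M (incident_edges E C) F v) < s"
  shows "card (incident_edges E C) \<le> \<delta> * card {v\<in>B. degree F v = s} + s * card B
           + card (incident_edges E {u\<in>C. M \<le> degree F u})"
proof -
  let ?EC = "incident_edges E C" and ?B' = "{v\<in>B. degree F v = s}"
    and ?ES = "incident_edges E {u\<in>C. M \<le> degree F u}"
  have pointwise: "degree ?EC v \<le> (if v \<in> ?B' then \<delta> else 0) + s + degree ?ES v"
    if v: "v \<in> B" for v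
  proof (cases "v \<in> ?B'")
    case True
    have "degree ?EC v \<le> degree E v"
      using degree_mono[OF finite_E] by (simp add: incident_edges_def)
    then show ?thesis
      using True degB v by simp
  next
    case False
    have "{e\<in>?EC. v \<in> e} \<subseteq> free_edges C M ?EC F v \<union> {e\<in>?ES. v \<in> e}"
      by (auto simp: free_edges_def incident_edges_def)
    then have "degree ?EC v \<le> card (free_edges C M ?EC F v \<union> {e\<in>?ES. v \<in> e})"
      unfolding degree_def using finite_E
      by (intro card_mono) (auto simp: free_edges_def incident_edges_def)
    also have "\<dots> \<le> card (free_edges C M ?EC F v) + degree ?ES v"
      unfolding degree_def by (rule card_Un_le)
    finally have "degree ?EC v \<le> card (free_edges C M ?EC F v) + degree ?ES v" .
    moreover have "card (free_edges C M ?EC F v) < s"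
      using False maximal F v by (auto simp: capped_packing_def)
    ultimately show ?thesis
      using False by simp
  qed
  have "card ?EC = (\<Sum>v\<in>B. degree ?EC v)"
    using sum_degree_B[of ?EC] by (simp add: incident_edges_def)
  also have "\<dots> \<le> (\<Sum>v\<in>B. (if v \<in> ?B' then \<delta> else 0) + s + degree ?ES v)"
    using pointwise by (rule sum_mono)
  also have "\<dots> = (\<Sum>v\<in>B. if v \<in> ?B' then \<delta> else 0) + s * card B + card ?ES"
    using sum_degree_B[of ?ES] by (simp add: sum.distrib incident_edges_def)
  also have "(\<Sum>v\<in>B. if v \<in> ?B' then \<delta> else 0) = \<delta> * card ?B'"
    using finite_B by (simp add: sum.If_cases Int_def)
  finally show ?thesis .
qed

lemma card_saturated_le:
  assumes C: "C \<subseteq> A" and F: "capped_packing C B s M (incident_edges E C) F"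
  shows "M * card {u\<in>C. M \<le> degree F u} \<le> s * card {v\<in>B. degree F v = s}"
proof -
  let ?S = "{u\<in>C. M \<le> degree F u}"
  have FE: "F \<subseteq> E" and FC: "\<And>e. e \<in> F \<Longrightarrow> \<exists>u\<in>C. u \<in> e"
    using F by (auto simp: capped_packing_def incident_edges_def)
  have "M * card ?S = (\<Sum>u\<in>?S. M)"
    by simp
  also have "\<dots> \<le> (\<Sum>u\<in>?S. degree F u)"
    by (rule sum_mono) simp
  also have "\<dots> \<le> (\<Sum>u\<in>C. degree F u)"
    using C finite_subset[OF C finite_A] by (intro sum_mono2) auto
  also have "\<dots> = (\<Sum>v\<in>B. degree F v)"
    using sum_degree_A[OF FE C FC] sum_degree_B[OF FE] by simp
  also have "\<dots> = s * card {v\<in>B. degree F v = s}"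
    using sum_degree_capped_packing[OF F finite_B] .
  finally show ?thesis .
qed

lemma card_class_le_centres:
  fixes a :: real
  assumes degB: "\<And>v. v \<in> B \<Longrightarrow> degree E v = \<delta>" and C: "C \<subseteq> A" and "0 < a"
    and deg_C: "\<And>u. u \<in> C \<Longrightarrow> a \<le> real (degree E u) \<and> real (degree E u) \<le> 8 * a"
    and \<delta>: "real \<delta> \<le> 2 * a" and "0 < s"
    and s: "2 * real s * real (card B) \<le> real (card (incident_edges E C))"
    and F: "capped_packing C B s (8 * s) (incident_edges E C) F"
    and maximal: "\<forall>v\<in>B. degree F v = 0 \<longrightarrow> card (free_edges C (8 * s) (incident_edges E C) F v) < s"
  shows "real (card C) \<le> 6 * real (card {v\<in>B. degree F v = s})"
proof -
  let ?S = "{u\<in>C. 8 * s \<le> degree F u}" and ?b = "real (card {v\<in>B. degree F v = s})"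
  let ?eC = "real (card (incident_edges E C))" and ?eS = "real (card (incident_edges E ?S))"
  have "?eC \<le> real \<delta> * ?b + real s * real (card B) + ?eS"
    using card_incident_edges_le_packing[OF degB C F maximal] by (simp flip: of_nat_mult of_nat_add)
  moreover have "?eS \<le> a * ?b"
  proof -
    have "?eS = (\<Sum>u\<in>?S. real (degree E u))"
      using C by (subst card_incident_edges) auto
    also have "\<dots> \<le> (\<Sum>u\<in>?S. 8 * a)"
      using deg_C by (intro sum_mono) auto
    also have "\<dots> = a * real (8 * card ?S)"
      by simp
    also have "\<dots> \<le> a * ?b"
    proof -
      have "8 * card ?S \<le> card {v\<in>B. degree F v = s}"
        using card_saturated_le[OF C F] \<open>0 < s\<close> by simp
      then show ?thesis
        using \<open>0 < a\<close> by (intro mult_left_mono) (simp_all only: of_nat_le_iff less_imp_le)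
    qed
    finally show ?thesis .
  qed
  moreover have "a * real (card C) \<le> ?eC"
  proof -
    have "a * real (card C) = (\<Sum>u\<in>C. a)"
      by simp
    also have "\<dots> \<le> (\<Sum>u\<in>C. real (degree E u))"
      using deg_C by (intro sum_mono) auto
    finally show ?thesis
      using card_incident_edges[OF C] by simp
  qed
  moreover have "real \<delta> * ?b \<le> 2 * a * ?b"
    using \<delta> by (intro mult_right_mono) auto
  ultimately have "a * real (card C) \<le> a * (6 * ?b)"
    using s by linarith
  then show ?thesis
    using \<open>0 < a\<close> by simp
qed

text \<open>The maximal packing itself, on C and the centres of its stars, is the subgraph: its
  degrees are at most 8s, and there are at least |C|/6 centres, each of degree s.\<close>
lemma exists_almost_regular_subgraph_of_class:
  fixes a :: real
  assumes degB: "\<And>v. v \<in> B \<Longrightarrow> degree E v = \<delta>" and C: "C \<subseteq> A" "C \<noteq> {}" and "0 < a"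
    and deg_C: "\<And>u. u \<in> C \<Longrightarrow> a \<le> real (degree E u) \<and> real (degree E u) \<le> 8 * a"
    and \<delta>: "real \<delta> \<le> 2 * a" and "0 < s"
    and s: "2 * real s * real (card B) \<le> real (card (incident_edges E C))"
  shows "\<exists>V' E'. subgraph V' E' V E \<and> almost_regular 64 V' E' \<and> 2 * real s / 7 \<le> avg_degree V' E'"
proof -
  let ?EC = "incident_edges E C"
  have "finite ?EC"
    using finite_E by (simp add: incident_edges_def)
  then obtain F where F: "capped_packing C B s (8 * s) ?EC F"
    and maximal: "\<forall>v\<in>B. degree F v = 0 \<longrightarrow> card (free_edges C (8 * s) ?EC F v) < s"
    using exists_maximal_capped_packing[OF _ incident_edges_ends[OF C(1)]] C(1) parts_disjoint
      \<open>0 < s\<close>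
    by blast
  define B' where "B' = {v\<in>B. degree F v = s}"
  define W where "W = C \<union> B'"
  have FEC: "F \<subseteq> ?EC"
    using F by (simp add: capped_packing_def)
  then have FE: "F \<subseteq> E"
    by (auto simp: incident_edges_def)
  have F_ends: "\<And>e. e \<in> F \<Longrightarrow> \<exists>u\<in>C. \<exists>v\<in>B. e = {u, v}"
    using FEC incident_edges_ends[OF C(1)] by blast
  have "finite F"
    using finite_subset[OF FE finite_E] .
  have CB': "real (card C) \<le> 6 * real (card B')"
    unfolding B'_def using card_class_le_centres[OF degB C(1) \<open>0 < a\<close> deg_C \<delta> \<open>0 < s\<close> s F maximal] .
  have "finite C"
    using C(1) finite_A finite_subset by blast
  then have "B' \<noteq> {}"
    using CB' C(2) by auto
  have "W \<subseteq> V" "W \<noteq> {}"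
    using C parts \<open>B' \<noteq> {}\<close> by (auto simp: W_def B'_def)
  have "e \<subseteq> W" if "e \<in> F" for e
  proof -
    obtain u v where uv: "u \<in> C" "v \<in> B" "e = {u, v}"
      using F_ends \<open>e \<in> F\<close> by blast
    then have "degree F v \<noteq> 0"
      using that \<open>finite F\<close> by (auto simp: degree_def)
    then have "v \<in> B'"
      using F uv(2) by (auto simp: B'_def capped_packing_def)
    then show ?thesis
      using uv by (simp add: W_def)
  qed
  then have "graph W F"
    using FE graph_VE finite_subset[OF \<open>W \<subseteq> V\<close> finite_V] by (auto simp: graph_def)
  have maxdeg: "real (degree F v) \<le> 8 * real s" if "v \<in> W" for v
    using F that by (auto simp: W_def B'_def capped_packing_def)
  have "card F = s * card B'"
    using sum_degree_B[OF FE] sum_degree_capped_packing[OF F finite_B] by (simp add: B'_def)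
  moreover have "real (card W) \<le> 7 * real (card B')"
    using card_Un_le[of C B'] CB' unfolding W_def by linarith
  moreover have "0 < card W"
    using \<open>W \<noteq> {}\<close> finite_subset[OF \<open>W \<subseteq> V\<close> finite_V] by (simp add: card_gt_0_iff)
  ultimately have dense: "real s / 7 \<le> real (card F) / real (card W)"
    by (simp add: field_simps mult_left_mono)
  obtain V' E' where "subgraph V' E' V E" "almost_regular 64 V' E'"
    "avg_degree W F \<le> avg_degree V' E'"
    using almost_regular_subgraph_of_max_degree[OF \<open>graph W F\<close> \<open>W \<subseteq> V\<close> FE \<open>W \<noteq> {}\<close> maxdeg] dense
    by fastforce
  moreover have "2 * real s / 7 \<le> avg_degree W F"
    using dense by (simp add: avg_degree_def)
  ultimately show ?thesis
    by force
qed

lemma sum_degree_heavy_ge_half: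
  assumes "A \<noteq> {}"
  shows "real (card E) / 2 \<le>
           (\<Sum>u\<in>{u\<in>A. real (card E) / real (card A) / 2 \<le> real (degree E u)}. real (degree E u))"
    (is "_ \<le> (\<Sum>u\<in>?H. _)")
proof -
  let ?D = "real (card E) / real (card A)"
  have "(\<Sum>u\<in>A - ?H. real (degree E u)) \<le> (\<Sum>u\<in>A - ?H. ?D / 2)"
    by (intro sum_mono) auto
  also have "\<dots> \<le> (\<Sum>u\<in>A. ?D / 2)"
    using finite_A by (intro sum_mono2) auto
  also have "\<dots> = real (card E) / 2"
    using assms finite_A by simp
  finally have "(\<Sum>u\<in>A - ?H. real (degree E u)) \<le> real (card E) / 2" .
  moreover have "real (card E) = (\<Sum>u\<in>?H. real (degree E u)) + (\<Sum>u\<in>A - ?H. real (degree E u))"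
  proof -
    have "card E = (\<Sum>u\<in>A. degree E u)"
      using edge_ends by (intro sum_degree_A[symmetric]) fastforce+
    then show ?thesis
      using sum.subset_diff[of ?H A "\<lambda>u. real (degree E u)"] finite_A by (simp add: add.commute)
  qed
  ultimately show ?thesis
    by linarith
qed

text \<open>The vertices of degree at least D/2 carry at least half of the edges; split them into the
  classes D/2 \<le> 8^(-j) d(u) < 4 D, j = 0, ..., log_8 (2L), and take the heaviest class.\<close>
lemma exists_heavy_degree_class:
  fixes L :: real
  assumes "1 \<le> L" "A \<noteq> {}" "E \<noteq> {}"
    and maxdeg: "\<And>u. u \<in> A \<Longrightarrow> real (degree E u) \<le> L * (real (card E) / real (card A))"
  shows "\<exists>C a. C \<subseteq> A \<and> C \<noteq> {} \<and> real (card E) / real (card A) / 2 \<le> a \<and>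
           (\<forall>u\<in>C. a \<le> real (degree E u) \<and> real (degree E u) \<le> 8 * a) \<and>
           3 * real (card E) \<le> 2 * (log 2 L + 4) * (\<Sum>u\<in>C. real (degree E u))"
proof -
  define D where "D = real (card E) / real (card A)"
  define H where "H = {u\<in>A. D / 2 \<le> real (degree E u)}"
  define level where "level u = nat \<lfloor>log 8 (2 * real (degree E u) / D)\<rfloor>" for u
  define K where "K = nat \<lfloor>log 8 (2 * L)\<rfloor>"
  have "0 < D"
    using assms(2,3) finite_A finite_E by (simp add: D_def card_gt_0_iff)
  have level_bounds: "level u \<le> K \<and> 8 ^ level u * D \<le> 2 * real (degree E u)
      \<and> 2 * real (degree E u) < 8 ^ (level u + 1) * D" if "u \<in> H" for u
  proof -
    let ?y = "2 * real (degree E u) / D"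
    have "1 \<le> ?y"
      using that \<open>0 < D\<close> by (simp add: H_def le_divide_eq)
    moreover have "real (degree E u) \<le> L * D"
      using that maxdeg by (simp add: H_def D_def)
    then have "?y \<le> 2 * L"
      using \<open>0 < D\<close> by (simp add: divide_le_eq)
    ultimately have "level u \<le> K"
      unfolding level_def K_def by (intro nat_mono floor_mono) simp
    then show ?thesis
      using power_floor_log_bounds[of 8 ?y] \<open>1 \<le> ?y\<close> \<open>0 < D\<close> by (simp add: level_def field_simps)
  qed
  define f where "f j = (\<Sum>u\<in>{u\<in>H. level u = j}. real (degree E u))" for j
  have "(\<Sum>j\<le>K. f j) = (\<Sum>u\<in>H. real (degree E u))"
    unfolding f_def using level_bounds finite_A by (intro sum.group) (auto simp: H_def)
  then obtain j where "j \<le> K" and j: "real (card E) / 2 \<le> real (K + 1) * f j"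
    using exists_ge_average[of "{..K}" f] sum_degree_heavy_ge_half[OF assms(2)]
    by (auto simp: H_def D_def)
  have "real K \<le> log 8 (2 * L)"
    using assms(1) by (simp add: K_def)
  then have "3 * real (K + 1) \<le> log 2 L + 4"
    using assms(1) by (simp add: log8_eq log_mult)
  moreover have "0 \<le> f j"
    unfolding f_def by (simp add: sum_nonneg)
  ultimately have "3 * real (card E) \<le> 2 * (log 2 L + 4) * f j"
    using j mult_right_mono[of "3 * real (K + 1)" "log 2 L + 4" "f j"] by linarith
  moreover have "{u\<in>H. level u = j} \<noteq> {}"
  proof
    assume "{u\<in>H. level u = j} = {}"
    then have "f j = 0"
      unfolding f_def by (simp only: sum.empty)
    then show False
      using j assms(3) finite_E by (simp add: card_gt_0_iff)
  qed
  moreover have "D / 2 \<le> 8 ^ j * D / 2"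
    using \<open>0 < D\<close> by simp
  moreover have "8 ^ j * D / 2 \<le> real (degree E u) \<and> real (degree E u) \<le> 8 * (8 ^ j * D / 2)"
    if "u \<in> {u\<in>H. level u = j}" for u
    using level_bounds[of u] that by auto
  ultimately show ?thesis
    unfolding D_def f_def
    by (intro exI[of _ "{u\<in>H. level u = j}"] exI[of _ "8 ^ j * D / 2"]) (auto simp: H_def D_def)
qed

lemma exists_almost_regular_subgraph_of_large_degree:
  fixes L :: real
  assumes degB: "\<And>v. v \<in> B \<Longrightarrow> degree E v = \<delta>" and "A \<noteq> {}"
    and \<delta>: "real \<delta> \<le> real (card E) / real (card A)"
    and maxdeg: "\<And>u. u \<in> A \<Longrightarrow> real (degree E u) \<le> L * (real (card E) / real (card A))"
    and "64 \<le> L" and large: "16 * log 2 L < real \<delta>"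
  shows "\<exists>V' E'. subgraph V' E' V E \<and> almost_regular 64 V' E' \<and>
           real \<delta> / (16 * log 2 L) \<le> avg_degree V' E'"
proof -
  have "6 \<le> log 2 L"
    using \<open>64 \<le> L\<close> log_pow_cancel[of 2 6] log_le_cancel_iff[of 2 64 L] by simp
  then have "E \<noteq> {}"
    using large \<delta> by auto
  have "1 \<le> L"
    using \<open>64 \<le> L\<close> by simp
  define D where "D = real (card E) / real (card A)"
  obtain C a where C: "C \<subseteq> A" "C \<noteq> {}" and a: "D / 2 \<le> a"
    and deg_C: "\<forall>u\<in>C. a \<le> real (degree E u) \<and> real (degree E u) \<le> 8 * a"
    and heavy: "3 * real (card E) \<le> 2 * (log 2 L + 4) * (\<Sum>u\<in>C. real (degree E u))"
    using exists_heavy_degree_class[OF \<open>1 \<le> L\<close> \<open>A \<noteq> {}\<close> \<open>E \<noteq> {}\<close> maxdeg, folded D_def]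
    by blast
  have "card E = \<delta> * card B"
    using sum_degree_B[of E] degB by (simp add: mult.commute)
  then have "0 < real (card B)"
    using \<open>E \<noteq> {}\<close> finite_E by (metis card_gt_0_iff mult_0_right neq0_conv of_nat_0_less_iff)
  moreover have "3 * real \<delta> * real (card B) \<le>
      2 * (log 2 L + 4) * real (card (incident_edges E C))"
    using heavy card_incident_edges[OF C(1)] \<open>card E = \<delta> * card B\<close> by simp
  ultimately obtain s where "0 < s"
    and s: "2 * real s * real (card B) \<le> real (card (incident_edges E C))"
    and bound: "real \<delta> / (16 * log 2 L) \<le> 2 * real s / 7"
    using exists_star_size[OF \<open>6 \<le> log 2 L\<close> large] by blast
  have "real \<delta> \<le> 2 * a"
    using \<delta> a unfolding D_def[symmetric] by linarith
  moreover have "0 < a"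
    using \<open>real \<delta> \<le> 2 * a\<close> large \<open>6 \<le> log 2 L\<close> by linarith
  ultimately obtain V' E' where "subgraph V' E' V E" "almost_regular 64 V' E'"
    "2 * real s / 7 \<le> avg_degree V' E'"
    using exists_almost_regular_subgraph_of_class[OF degB C _ deg_C[rule_format] _ \<open>0 < s\<close> s]
    by blast
  then show ?thesis
    using bound by fastforce
qed

end

theorem lemma3p5:
  fixes V :: "'a set" and E :: "'a set set" and L :: real and \<delta> :: nat
  assumes "L \<ge> real \<delta>" and "\<delta> \<ge> 2"
    and "almost_biregular L \<delta> V E"
  shows "\<exists>V' E'. subgraph V' E' V E \<and> almost_regular 64 V' E' \<and>
           avg_degree V' E' \<ge> real \<delta> / (16 * log 2 L)"
proof -
  obtain A B where "graph V E" "A \<union> B = V" "A \<inter> B = {}" "A \<noteq> {}"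
    and ends: "\<forall>e\<in>E. \<exists>a\<in>A. \<exists>b\<in>B. e = {a, b}" and degB: "\<forall>v\<in>B. degree E v = \<delta>"
    and \<delta>: "real \<delta> \<le> real (card E) / real (card A)"
    and maxdeg: "\<forall>u\<in>A. real (degree E u) \<le> L * (real (card E) / real (card A))"
    using assms(3) unfolding almost_biregular_def by blast
  interpret bipartite_graph V E A B
    using \<open>graph V E\<close> \<open>A \<union> B = V\<close> \<open>A \<inter> B = {}\<close> ends by unfold_locales blast+
  show ?thesis
  proof (cases "real \<delta> \<le> 16 * log 2 L")
    case True
    have "E \<noteq> {}"
      using \<delta> assms(2) by auto
    then obtain e where "e \<in> E"
      by blast
    moreover have "real \<delta> / (16 * log 2 L) \<le> 1"
      using True assms(2) by simp
    ultimately show ?thesis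
      using exists_almost_regular_subgraph_of_edge[OF graph_VE] by (meson order_trans)
  next
    case False
    have "64 \<le> L"
      using le_16_log2[of L] assms(1,2) False by linarith
    then show ?thesis
      using exists_almost_regular_subgraph_of_large_degree[OF degB[rule_format] \<open>A \<noteq> {}\<close> \<delta>
          maxdeg[rule_format]] False
      by simp
  qed
qed

end
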